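(* Let $1\le b<\frac{n}{2}-1$ and let $T$ be a tree attaining the maximum value of $M_2$ over $\mathcal{CT}^*_{n,b}$. Then every vertex of degree $3$ in $T$ (if any) has at most one neighbor of degree $4$.
   Context: A chemical tree is a tree with maximum degree at most $4$. A branching vertex is a vertex of degree greater than $2$. $\mathcal{CT}^*_{n,b}$ is the class of all $n$-vertex chemical trees with exactly $b$ branching vertices. $M_2(G)=\sum_{uv\in E(G)}d_ud_v$, where $d_v$ is the degree of $v$. *)

theory Defs
  imports Complex_Main
begin

definition simple_graph :: "nat \<Rightarrow> nat set set \<Rightarrow> bool" where
  "simple_graph n E \<longleftrightarrow> (\<forall>e\<in>E. card e = 2 \<and> e \<subseteq> {..<n})"

definition adj :: "nat set set \<Rightarrow> nat \<Rightarrow> nat \<Rightarrow> bool" where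
  "adj E u v \<longleftrightarrow> {u, v} \<in> E"

definition deg :: "nat set set \<Rightarrow> nat \<Rightarrow> nat" where
  "deg E v = card {e\<in>E. v \<in> e}"

definition connected_graph :: "nat \<Rightarrow> nat set set \<Rightarrow> bool" where
  "connected_graph n E \<longleftrightarrow>
     (\<forall>u<n. \<forall>v<n. (u, v) \<in> {(x, y). adj E x y}\<^sup>*)"

definition has_cycle :: "nat set set \<Rightarrow> bool" where
  "has_cycle E \<longleftrightarrow> (\<exists>vs. length vs \<ge> 3 \<and> distinct vs \<and>
      (\<forall>i < length vs - 1. adj E (vs ! i) (vs ! Suc i)) \<and> adj E (last vs) (hd vs))"

definition is_tree :: "nat \<Rightarrow> nat set set \<Rightarrow> bool" where
  "is_tree n E \<longleftrightarrow> n \<ge> 1 \<and> simple_graph n E \<and> connected_graph n E \<and> \<not> has_cycle E"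

definition branching_vertices :: "nat \<Rightarrow> nat set set \<Rightarrow> nat set" where
  "branching_vertices n E = {v\<in>{..<n}. deg E v > 2}"

text \<open>CT*_{n,b}: chemical trees (max degree <= 4) on n vertices with exactly b branching vertices.
  Vertices are labelled 0..n-1; every n-vertex tree is isomorphic to one of these.\<close>
definition CT_star :: "nat \<Rightarrow> nat \<Rightarrow> nat set set set" where
  "CT_star n b = {E. is_tree n E \<and> (\<forall>v<n. deg E v \<le> 4) \<and> card (branching_vertices n E) = b}"

definition M2 :: "nat set set \<Rightarrow> nat" where
  "M2 E = (\<Sum>e\<in>E. \<Prod>v\<in>e. deg E v)"

end

theory Submission
  imports Defs
begin

text \<open>Suppose a vertex \<open>v\<close> of degree 3 has two neighbours \<open>x\<close>, \<open>y\<close> of degree 4. Walking from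
  \<open>v\<close> through \<open>x\<close> along vertices of degree 4, the finite tree forces the walk to leave them along
  an edge \<open>rs\<close> with \<open>deg r = 4 > deg s\<close>. Replacing the edges \<open>yv\<close>, \<open>rs\<close> by \<open>yr\<close>, \<open>sv\<close>
  gives a tree with the same degree at every vertex, hence again in \<open>CT*(n,b)\<close>, whose \<open>M\<^sub>2\<close>
  is larger by \<open>(d\<^sub>y - d\<^sub>s)(d\<^sub>r - d\<^sub>v) = 4 - d\<^sub>s > 0\<close>.\<close>

definition reach :: "nat set set \<Rightarrow> nat \<Rightarrow> nat \<Rightarrow> bool" where
  "reach E x y \<longleftrightarrow> (x, y) \<in> {(x, y). adj E x y}\<^sup>*"

lemma reach_refl [simp]: "reach E x x"
  by (simp add: reach_def)

lemma reach_step: "reach E x y \<Longrightarrow> {y, z} \<in> E \<Longrightarrow> reach E x z"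
  unfolding reach_def adj_def by (simp add: rtrancl.rtrancl_into_rtrancl)

lemma reach_edge: "{x, y} \<in> E \<Longrightarrow> reach E x y"
  using reach_step[of E x x y] by simp

lemma reach_trans: "reach E x y \<Longrightarrow> reach E y z \<Longrightarrow> reach E x z"
  unfolding reach_def by simp

lemma reach_induct [consumes 1, case_names refl step]:
  assumes "reach E x y" "P x" "\<And>y z. reach E x y \<Longrightarrow> {y, z} \<in> E \<Longrightarrow> P y \<Longrightarrow> P z"
  shows "P y"
  using assms(1) unfolding reach_def
proof (induction rule: rtrancl_induct)
  case base
  then show ?case using assms(2) by simp
next
  case (step y z)
  then show ?case using assms(3)[of y z] unfolding reach_def adj_def by simp
qed

lemma reach_sym: "reach E x y \<Longrightarrow> reach E y x"
proof (induction rule: reach_induct)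
  case (step y z)
  have "reach E z y" using step(2) by (simp add: reach_edge insert_commute)
  then show ?case using step(3) by (rule reach_trans)
qed simp

lemma reach_mono: "reach E x y \<Longrightarrow> E \<subseteq> F \<Longrightarrow> reach F x y"
  by (induction rule: reach_induct) (auto intro: reach_step)

lemma connected_graph_iff_reach: "connected_graph n E \<longleftrightarrow> (\<forall>u<n. \<forall>v<n. reach E u v)"
  unfolding connected_graph_def reach_def by simp

lemma reach_less:
  assumes "simple_graph n E" "reach E x y" "x < n"
  shows "y < n"
  using assms(2,3)
proof (induction rule: reach_induct)
  case (step y z)
  then have "{y, z} \<subseteq> {..<n}" using assms(1) unfolding simple_graph_def by blast
  then show ?case by simp
qed

lemma reach_insert_edge:
  assumes "reach (insert f H) x y"
  shows "reach H x y \<or> (\<exists>p q. f = {p, q} \<and> reach H x p \<and> reach H q y)"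
  using assms
proof (induction rule: reach_induct)
  case (step y z)
  show ?case
  proof (cases "{y, z} = f")
    case True
    from step(3) show ?thesis
    proof
      assume "reach H x y"
      with True show ?thesis by (metis reach_refl)
    next
      assume "\<exists>p q. f = {p, q} \<and> reach H x p \<and> reach H q y"
      then obtain p q where pq: "f = {p, q}" "reach H x p" "reach H q y" by blast
      with True have "p = y \<or> p = z" by (auto simp: doubleton_eq_iff)
      with pq True show ?thesis by (metis reach_refl)
    qed
  next
    case False
    then have "{y, z} \<in> H" using step(2) by simp
    with step(3) show ?thesis by (auto intro: reach_step)
  qed
qed simp

definition walk :: "nat set set \<Rightarrow> nat list \<Rightarrow> bool" where
  "walk E vs \<longleftrightarrow> (\<forall>i < length vs - 1. adj E (vs ! i) (vs ! Suc i))"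

lemma walk_snoc:
  assumes "vs \<noteq> []"
  shows "walk E (vs @ [z]) \<longleftrightarrow> walk E vs \<and> adj E (last vs) z"
proof
  assume snoc: "walk E (vs @ [z])"
  have "adj E (vs ! i) (vs ! Suc i)" if "i < length vs - 1" for i
  proof -
    from that have "Suc i < length vs" by linarith
    with snoc show ?thesis unfolding walk_def by (auto simp: nth_append dest!: spec[of _ i])
  qed
  moreover have "adj E (last vs) z"
    using snoc assms unfolding walk_def
    by (auto simp: nth_append last_conv_nth dest!: spec[of _ "length vs - 1"])
  ultimately show "walk E vs \<and> adj E (last vs) z" unfolding walk_def by blast
next
  assume "walk E vs \<and> adj E (last vs) z"
  then show "walk E (vs @ [z])"
    unfolding walk_def
  proof (intro allI impI; elim conjE)
    fix i assume i: "i < length (vs @ [z]) - 1"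
      and "\<forall>i < length vs - 1. adj E (vs ! i) (vs ! Suc i)" "adj E (last vs) z"
    then show "adj E ((vs @ [z]) ! i) ((vs @ [z]) ! Suc i)"
    proof (cases "Suc i < length vs")
      case False
      with i have "i = length vs - 1" by simp
      with assms \<open>adj E (last vs) z\<close> show ?thesis
        by (simp add: nth_append last_conv_nth)
    qed (auto simp: nth_append)
  qed
qed

lemma walk_take: "walk E vs \<Longrightarrow> walk E (take k vs)"
  unfolding walk_def by auto

lemma walk_drop: "walk E vs \<Longrightarrow> walk E (drop k vs)"
  unfolding walk_def by auto

lemma walk_Diff:
  "walk E vs \<Longrightarrow> (\<And>i. i < length vs - 1 \<Longrightarrow> {vs ! i, vs ! Suc i} \<notin> D) \<Longrightarrow> walk (E - D) vs"
  unfolding walk_def adj_def by auto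

lemma reach_walk:
  assumes "walk E vs" "vs \<noteq> []"
  shows "reach E (hd vs) (last vs)"
proof -
  have "reach E (vs ! 0) (vs ! k)" if "k < length vs" for k
    using that
  proof (induction k)
    case (Suc k)
    then have "{vs ! k, vs ! Suc k} \<in> E" using assms(1) unfolding walk_def adj_def by simp
    with Suc show ?case by (simp add: reach_step)
  qed simp
  then show ?thesis using assms(2) by (simp add: hd_conv_nth last_conv_nth)
qed

lemma reach_imp_distinct_walk:
  assumes "reach E x y"
  shows "\<exists>vs. vs \<noteq> [] \<and> hd vs = x \<and> last vs = y \<and> distinct vs \<and> walk E vs"
  using assms
proof (induction rule: reach_induct)
  case refl
  show ?case by (intro exI[of _ "[x]"]) (simp add: walk_def)
next
  case (step y z)
  then obtain vs where vs: "vs \<noteq> []" "hd vs = x" "last vs = y" "distinct vs" "walk E vs"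
    by blast
  show ?case
  proof (cases "z \<in> set vs")
    case True
    then obtain j where j: "j < length vs" "vs ! j = z" by (metis in_set_conv_nth)
    have "last (take (Suc j) vs) = z"
      using j by (simp add: take_Suc_conv_app_nth)
    then show ?thesis using vs j
      by (intro exI[of _ "take (Suc j) vs"]) (simp add: walk_take hd_take)
  next
    case False
    have "adj E (last vs) z" using step(2) vs(3) by (simp add: adj_def)
    then show ?thesis using vs False
      by (intro exI[of _ "vs @ [z]"]) (simp add: walk_snoc)
  qed
qed

lemma distinct_nth_doubleton_eq:
  assumes "distinct vs" "i < length vs" "j < length vs" "k < length vs" "l < length vs"
  shows "{vs ! i, vs ! j} = {vs ! k, vs ! l} \<longleftrightarrow> {i, j} = {k, l}"
proof -
  have "inj_on (\<lambda>i. vs ! i) {..<length vs}"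
    using assms(1) by (simp add: inj_on_def nth_eq_iff_index_eq)
  then have "(\<lambda>i. vs ! i) ` {i, j} = (\<lambda>i. vs ! i) ` {k, l} \<longleftrightarrow> {i, j} = {k, l}"
    using assms(2-) by (intro inj_on_image_eq_iff) auto
  then show ?thesis by simp
qed

text \<open>Acyclicity is handled through the equivalent condition that every edge is a bridge,
  which is easier to carry through edge rotations.\<close>

definition all_bridges :: "nat set set \<Rightarrow> bool" where
  "all_bridges E \<longleftrightarrow> (\<forall>u w. {u, w} \<in> E \<longrightarrow> \<not> reach (E - {{u, w}}) u w)"

lemma all_bridges_imp_no_cycle:
  assumes "all_bridges E"
  shows "\<not> has_cycle E"
proof
  assume "has_cycle E"
  then obtain vs where vs: "3 \<le> length vs" "distinct vs" "walk E vs" "adj E (last vs) (hd vs)"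
    unfolding has_cycle_def walk_def by blast
  let ?m = "length vs - 1"
  have "vs \<noteq> []" using vs(1) by auto
  then have ends: "hd vs = vs ! 0" "last vs = vs ! ?m"
    by (simp_all add: hd_conv_nth last_conv_nth)
  let ?e = "{hd vs, last vs}"
  have "?e \<in> E" using vs(4) by (simp add: adj_def insert_commute)
  moreover have "walk (E - {?e}) vs"
  proof (rule walk_Diff[OF vs(3)])
    fix i assume i: "i < length vs - 1"
    then have "{i, Suc i} \<noteq> {0, ?m}" using vs(1) by (auto simp: doubleton_eq_iff)
    moreover have "i < length vs" "Suc i < length vs" "0 < length vs" "?m < length vs"
      using i by linarith+
    ultimately have "{vs ! i, vs ! Suc i} \<noteq> {vs ! 0, vs ! ?m}"
      using distinct_nth_doubleton_eq[OF vs(2)] by simp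
    then show "{vs ! i, vs ! Suc i} \<notin> {?e}" using ends by simp
  qed
  then have "reach (E - {?e}) (hd vs) (last vs)"
    using vs(1) by (intro reach_walk) auto
  ultimately show False using assms unfolding all_bridges_def by blast
qed

lemma no_cycle_imp_all_bridges:
  assumes "simple_graph n E" "\<not> has_cycle E"
  shows "all_bridges E"
  unfolding all_bridges_def
proof (intro allI impI notI)
  fix u w assume uw: "{u, w} \<in> E" and r: "reach (E - {{u, w}}) u w"
  have "u \<noteq> w" using assms(1) uw unfolding simple_graph_def by force
  obtain vs where vs: "vs \<noteq> []" "hd vs = u" "last vs = w" "distinct vs" "walk (E - {{u, w}}) vs"
    using reach_imp_distinct_walk[OF r] by blast
  have "length vs \<noteq> 1" using vs \<open>u \<noteq> w\<close> by (auto simp: hd_conv_nth last_conv_nth)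
  moreover have "length vs \<noteq> 2"
  proof
    assume "length vs = 2"
    then have "adj (E - {{u, w}}) (hd vs) (last vs)"
      using vs(1,5) by (simp add: walk_def hd_conv_nth last_conv_nth)
    then show False using vs(2,3) by (simp add: adj_def)
  qed
  ultimately have "3 \<le> length vs" using vs(1) by (cases "length vs") auto
  moreover have "walk E vs" using vs(5) by (auto simp: walk_def adj_def)
  moreover have "adj E (last vs) (hd vs)" using vs uw by (simp add: adj_def insert_commute)
  ultimately have "has_cycle E" using vs(4) unfolding has_cycle_def walk_def by blast
  then show False using assms(2) by simp
qed

lemma is_tree_iff_all_bridges:
  "is_tree n E \<longleftrightarrow> 1 \<le> n \<and> simple_graph n E \<and> connected_graph n E \<and> all_bridges E"
  unfolding is_tree_def
  using all_bridges_imp_no_cycle no_cycle_imp_all_bridges by blast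

lemma simple_graph_finite: "simple_graph n E \<Longrightarrow> finite E"
  unfolding simple_graph_def by (meson Pow_iff finite_Pow_iff finite_lessThan finite_subset subsetI)

lemma simple_graph_edge_neq: "simple_graph n E \<Longrightarrow> {a, b} \<in> E \<Longrightarrow> a \<noteq> b"
  unfolding simple_graph_def by force

definition rotate_edge :: "nat set set \<Rightarrow> nat \<Rightarrow> nat \<Rightarrow> nat \<Rightarrow> nat set set" where
  "rotate_edge E a b c = insert {a, c} (E - {{a, b}})"

lemma rotate_edge_fresh:
  assumes "all_bridges E" "{a, b} \<in> E" "reach (E - {{a, b}}) b c"
  shows "a \<noteq> c" and "{a, c} \<notin> E - {{a, b}}"
proof -
  have no_ab: "\<not> reach (E - {{a, b}}) a b" using assms(1,2) unfolding all_bridges_def by blast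
  then show "a \<noteq> c" using assms(3) reach_sym by blast
  show "{a, c} \<notin> E - {{a, b}}"
  proof
    assume "{a, c} \<in> E - {{a, b}}"
    then have "reach (E - {{a, b}}) a c" by (rule reach_edge)
    then show False using no_ab assms(3) reach_sym reach_trans by blast
  qed
qed

lemma simple_graph_rotate_edge:
  assumes "simple_graph n E" "{a, b} \<in> E" "c < n" "a \<noteq> c"
  shows "simple_graph n (rotate_edge E a b c)"
  using assms unfolding simple_graph_def rotate_edge_def by auto

lemma connected_graph_rotate_edge:
  assumes "connected_graph n E" "{a, b} \<in> E" "a < n" "reach (E - {{a, b}}) b c"
  shows "connected_graph n (rotate_edge E a b c)"
proof -
  let ?E' = "rotate_edge E a b c"
  have sub: "E - {{a, b}} \<subseteq> ?E'" unfolding rotate_edge_def by blast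
  have "reach ?E' a u" if "u < n" for u
  proof -
    have "reach E a u" using assms(1,3) that unfolding connected_graph_iff_reach by blast
    then have "reach (insert {a, b} (E - {{a, b}})) a u" using assms(2) by (simp add: insert_absorb)
    from reach_insert_edge[OF this] have "reach (E - {{a, b}}) a u \<or> reach (E - {{a, b}}) b u"
      by (auto simp: doubleton_eq_iff)
    then show ?thesis
    proof
      assume "reach (E - {{a, b}}) b u"
      moreover have "reach ?E' a c" unfolding rotate_edge_def by (rule reach_edge) simp
      ultimately show ?thesis
        using assms(4) sub by (meson reach_mono reach_sym reach_trans)
    qed (use sub reach_mono in blast)
  qed
  then show ?thesis unfolding connected_graph_iff_reach using reach_sym reach_trans by blast
qed

text \<open>Walks \<open>p \<leadsto> a\<close> and \<open>c \<leadsto> q\<close> avoiding \<open>ab\<close> and \<open>pq\<close>, together with \<open>ab\<close> and the walk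
  \<open>b \<leadsto> c\<close>, would join the ends of the bridge \<open>pq\<close>; if the walk \<open>b \<leadsto> c\<close> uses \<open>pq\<close>, its part
  before \<open>pq\<close> already joins \<open>b\<close> to \<open>a\<close> or \<open>p\<close> to \<open>q\<close> avoiding the respective bridge.\<close>

lemma all_bridges_no_crossing:
  assumes bridges: "all_bridges E" and ab: "{a, b} \<in> E" and bc: "reach (E - {{a, b}}) b c"
    and pq: "{p, q} \<in> E" "{p, q} \<noteq> {a, b}" and pa: "reach (E - {{a, b}} - {{p, q}}) p a"
  shows "\<not> reach (E - {{a, b}} - {{p, q}}) c q"
proof
  let ?H = "E - {{a, b}}"
  let ?G = "?H - {{p, q}}"
  assume cq: "reach ?G c q"
  have not_ab: "\<not> reach ?H a b" using bridges ab unfolding all_bridges_def by blast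
  have not_pq: "\<not> reach (E - {{p, q}}) p q" using bridges pq(1) unfolding all_bridges_def by blast
  have GF: "?G \<subseteq> E - {{p, q}}" by blast
  have "{a, b} \<in> E - {{p, q}}" using ab pq(2) by blast
  then have "reach (E - {{p, q}}) a b" by (rule reach_edge)
  with reach_mono[OF pa GF] have pb: "reach (E - {{p, q}}) p b" by (rule reach_trans)
  have "insert {p, q} ?G = ?H" using pq by blast
  then have "reach (insert {p, q} ?G) b c" using bc by simp
  from reach_insert_edge[OF this] show False
  proof
    assume "reach ?G b c"
    with pb have "reach (E - {{p, q}}) p c" using reach_mono[OF _ GF] reach_trans by blast
    with reach_mono[OF cq GF] show False using not_pq reach_trans by blast
  next
    assume "\<exists>p' q'. {p, q} = {p', q'} \<and> reach ?G b p' \<and> reach ?G q' c"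
    then consider "reach ?G b p" | "reach ?G b q" by (auto simp: doubleton_eq_iff)
    then show False
    proof cases
      case 1
      from 1 pa have "reach ?G b a" by (rule reach_trans)
      then have "reach ?H a b" using reach_mono[of ?G b a ?H] reach_sym by blast
      then show False using not_ab by blast
    next
      case 2
      with pb show False using reach_mono[OF 2 GF] not_pq reach_trans by blast
    qed
  qed
qed

lemma all_bridges_rotate_edge:
  assumes bridges: "all_bridges E" and ab: "{a, b} \<in> E" and bc: "reach (E - {{a, b}}) b c"
  shows "all_bridges (rotate_edge E a b c)"
  unfolding all_bridges_def
proof (intro allI impI notI)
  let ?H = "E - {{a, b}}"
  fix u w assume uw: "{u, w} \<in> rotate_edge E a b c"
    and uw_reach: "reach (rotate_edge E a b c - {{u, w}}) u w"
  show False
  proof (cases "{u, w} = {a, c}")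
    case True
    then have "rotate_edge E a b c - {{u, w}} = ?H"
      using rotate_edge_fresh(2)[OF bridges ab bc] unfolding rotate_edge_def by auto
    moreover have "u = a \<and> w = c \<or> u = c \<and> w = a" using True by (simp add: doubleton_eq_iff)
    ultimately have "reach ?H a c" using uw_reach reach_sym by auto
    then have "reach ?H a b" using bc reach_sym reach_trans by blast
    then show False using bridges ab unfolding all_bridges_def by blast
  next
    case False
    let ?G = "?H - {{u, w}}"
    have e: "{u, w} \<in> E" "{u, w} \<noteq> {a, b}" using uw False unfolding rotate_edge_def by auto
    have "rotate_edge E a b c - {{u, w}} = insert {a, c} ?G"
      using False unfolding rotate_edge_def by auto
    with uw_reach have "reach (insert {a, c} ?G) u w" by simp
    from reach_insert_edge[OF this] show False
    proof
      assume "reach ?G u w"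
      then show False using bridges e(1) reach_mono unfolding all_bridges_def by blast
    next
      assume "\<exists>p q. {a, c} = {p, q} \<and> reach ?G u p \<and> reach ?G q w"
      then consider "reach ?G u a" "reach ?G c w" | "reach ?G w a" "reach ?G c u"
        by (auto simp: doubleton_eq_iff intro: reach_sym)
      then show False
      proof cases
        case 1
        then show False using all_bridges_no_crossing[OF bridges ab bc e] by blast
      next
        case 2
        have "{w, u} = {u, w}" by (rule insert_commute)
        with 2 show False using all_bridges_no_crossing[OF bridges ab bc, of w u] e
          by (simp only:) blast
      qed
    qed
  qed
qed

lemma is_tree_rotate_edge:
  assumes tree: "is_tree n E" and ab: "{a, b} \<in> E" and bc: "reach (E - {{a, b}}) b c"
  shows "is_tree n (rotate_edge E a b c)"
proof -
  have sg: "simple_graph n E" and bridges: "all_bridges E"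
    using tree by (simp_all add: is_tree_iff_all_bridges)
  have "a < n" "b < n" using sg ab unfolding simple_graph_def by auto
  moreover have "c < n" using reach_less[OF sg reach_mono[OF bc] \<open>b < n\<close>] by blast
  ultimately show ?thesis
    using tree rotate_edge_fresh(1)[OF bridges ab bc]
    by (simp add: is_tree_iff_all_bridges simple_graph_rotate_edge connected_graph_rotate_edge
        all_bridges_rotate_edge ab bc)
qed

lemma deg_rotate_edge:
  assumes tree: "is_tree n E" and ab: "{a, b} \<in> E" and bc: "reach (E - {{a, b}}) b c"
  shows "deg (rotate_edge E a b c) w + of_bool (w = b) = deg E w + of_bool (w = c)"
proof -
  have sg: "simple_graph n E" and bridges: "all_bridges E"
    using tree by (simp_all add: is_tree_iff_all_bridges)
  have "a \<noteq> b" using simple_graph_edge_neq[OF sg ab] .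
  have "a \<noteq> c" and fresh: "{a, c} \<notin> E - {{a, b}}" using rotate_edge_fresh[OF bridges ab bc] by auto
  let ?S = "{e \<in> E. w \<in> e}"
  have fin: "finite ?S" using simple_graph_finite[OF sg] by simp
  have "{e \<in> rotate_edge E a b c. w \<in> e} =
      (if w \<in> {a, c} then insert {a, c} else id) (?S - {{a, b}})"
    unfolding rotate_edge_def by auto
  then have "deg (rotate_edge E a b c) w = card (?S - {{a, b}}) + of_bool (w \<in> {a, c})"
    unfolding deg_def using fin fresh by auto
  moreover have "card ?S = card (?S - {{a, b}}) + of_bool (w \<in> {a, b})"
  proof (cases "w \<in> {a, b}")
    case True
    then have "{a, b} \<in> ?S" using ab by simp
    with True show ?thesis using card_Suc_Diff1[OF fin] by fastforce
  next
    case False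
    then have "?S - {{a, b}} = ?S" by auto
    with False show ?thesis by simp
  qed
  ultimately show ?thesis
    unfolding deg_def using \<open>a \<noteq> b\<close> \<open>a \<noteq> c\<close> by auto
qed

lemma sum_rotate_edge:
  fixes g :: "nat set \<Rightarrow> 'a :: ab_group_add"
  assumes tree: "is_tree n E" and ab: "{a, b} \<in> E" and bc: "reach (E - {{a, b}}) b c"
  shows "sum g (rotate_edge E a b c) = sum g E - g {a, b} + g {a, c}"
proof -
  have sg: "simple_graph n E" and bridges: "all_bridges E"
    using tree by (simp_all add: is_tree_iff_all_bridges)
  have fin: "finite E" using simple_graph_finite[OF sg] .
  have "{a, c} \<notin> E - {{a, b}}" using rotate_edge_fresh(2)[OF bridges ab bc] .
  then show ?thesis
    unfolding rotate_edge_def using fin ab by (simp add: sum_diff1 algebra_simps)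
qed

lemma walk_set_lessThan:
  assumes sg: "simple_graph n E" and "walk E vs" "2 \<le> length vs"
  shows "set vs \<subseteq> {..<n}"
proof
  fix u assume "u \<in> set vs"
  then obtain i where i: "i < length vs" "vs ! i = u" by (metis in_set_conv_nth)
  define j where "j = (if i < length vs - 1 then i else i - 1)"
  have "j < length vs - 1" "i = j \<or> i = Suc j" using i assms(3) unfolding j_def by auto
  then have "{vs ! j, vs ! Suc j} \<in> E" "u \<in> {vs ! j, vs ! Suc j}"
    using assms(2) i(2) unfolding walk_def adj_def by auto
  then show "u \<in> {..<n}" using sg unfolding simple_graph_def by blast
qed

lemma forest_walk_extends:
  assumes sg: "simple_graph n E" and acyclic: "\<not> has_cycle E"
    and vs: "distinct vs" "walk E vs" "2 \<le> length vs" and deg: "2 \<le> deg E (last vs)"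
  shows "\<exists>s. {last vs, s} \<in> E \<and> s \<notin> set vs"
proof (rule ccontr)
  assume no_new: "\<nexists>s. {last vs, s} \<in> E \<and> s \<notin> set vs"
  let ?k = "length vs"
  let ?w = "last vs"
  have "vs \<noteq> []" using vs(3) by auto
  then have w: "?w = vs ! (?k - 1)" by (simp add: last_conv_nth)
  \<comment> \<open>an edge from the last vertex back to any vertex but its predecessor closes a cycle\<close>
  have "{e \<in> E. ?w \<in> e} \<subseteq> {{?w, vs ! (?k - 2)}}"
  proof
    fix e assume e: "e \<in> {e \<in> E. ?w \<in> e}"
    then obtain s where s: "e = {?w, s}" "s \<noteq> ?w"
      using sg unfolding simple_graph_def by (auto simp: card_2_iff doubleton_eq_iff)
    then have "s \<in> set vs" using no_new e by blast
    then obtain j where j: "j < ?k" "vs ! j = s" by (metis in_set_conv_nth)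
    have "j \<noteq> ?k - 1" using j s(2) w by auto
    moreover have "\<not> j < ?k - 2"
    proof
      assume "j < ?k - 2"
      then have "3 \<le> length (drop j vs)" "last (drop j vs) = ?w" "hd (drop j vs) = s"
        using j by (auto simp: hd_drop_conv_nth)
      moreover have "adj E ?w s" using e s(1) by (simp add: adj_def)
      ultimately have "has_cycle E"
        using vs(1) walk_drop[OF vs(2), of j] unfolding has_cycle_def walk_def by fastforce
      then show False using acyclic by simp
    qed
    ultimately have "j = ?k - 2" using j(1) by linarith
    then show "e \<in> {{?w, vs ! (?k - 2)}}" using s j by simp
  qed
  then have "deg E ?w \<le> 1"
    unfolding deg_def using card_mono[of "{{?w, vs ! (?k - 2)}}"] by fastforce
  then show False using deg by simp
qed

lemma forest_walk_to_boundary: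
  assumes sg: "simple_graph n E" and acyclic: "\<not> has_cycle E"
    and vx: "{v, x} \<in> E" and "P x" and P_deg: "\<And>w. P w \<Longrightarrow> 2 \<le> deg E w"
  shows "\<exists>vs s. take 2 vs = [v, x] \<and> distinct vs \<and> walk E vs \<and> P (last vs) \<and>
    {last vs, s} \<in> E \<and> s \<notin> set vs \<and> \<not> P s"
proof (rule ccontr)
  assume no_exit: "\<not> ?thesis"
  define good where
    "good vs \<longleftrightarrow> take 2 vs = [v, x] \<and> distinct vs \<and> walk E vs \<and> P (last vs)" for vs
  have longer: "\<exists>vs'. good vs' \<and> length vs' = Suc (length vs)" if "good vs" for vs
  proof -
    have vs: "take 2 vs = [v, x]" "distinct vs" "walk E vs" "P (last vs)"
      using that unfolding good_def by auto
    have "length (take 2 vs) = 2" using vs(1) by simp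
    then have len: "2 \<le> length vs" by simp
    obtain s where s: "{last vs, s} \<in> E" "s \<notin> set vs"
      using forest_walk_extends[OF sg acyclic vs(2,3) len P_deg[OF vs(4)]] by blast
    then have "P s" using no_exit vs unfolding good_def by blast
    moreover have "walk E (vs @ [s])"
      using vs(3) s(1) len by (subst walk_snoc) (auto simp: adj_def)
    ultimately have "good (vs @ [s])" using vs s(2) len unfolding good_def by simp
    then show ?thesis by auto
  qed
  have "v \<noteq> x" using simple_graph_edge_neq[OF sg vx] .
  then have "good [v, x]" using vx \<open>P x\<close> unfolding good_def walk_def adj_def by simp
  then have "\<exists>vs. good vs \<and> length vs = k + 2" for k
    by (induction k) (use longer in fastforce)+
  then obtain vs where vs: "good vs" "length vs = n + 2" by blast
  then have "set vs \<subseteq> {..<n}" using walk_set_lessThan[OF sg] unfolding good_def by simp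
  then have "card (set vs) \<le> n" using card_mono[of "{..<n}"] by fastforce
  moreover have "card (set vs) = n + 2" using vs unfolding good_def by (simp add: distinct_card)
  ultimately show False by simp
qed

lemma forest_boundary_edge:
  assumes sg: "simple_graph n E" and acyclic: "\<not> has_cycle E"
    and vx: "{v, x} \<in> E" and "P x" and P_deg: "\<And>w. P w \<Longrightarrow> 2 \<le> deg E w" and "y \<noteq> x"
  shows "\<exists>r s. {r, s} \<in> E \<and> P r \<and> \<not> P s \<and> reach (E - {{y, v}} - {{r, s}}) v r"
proof -
  obtain vs s where vs: "take 2 vs = [v, x]" "distinct vs" "walk E vs" "P (last vs)"
    and s: "{last vs, s} \<in> E" "s \<notin> set vs" "\<not> P s"
    using forest_walk_to_boundary[of n E v x P, OF sg acyclic vx \<open>P x\<close> P_deg] by blast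
  have vs_split: "vs = v # x # drop 2 vs" using append_take_drop_id[of 2 vs] vs(1) by simp
  have "v \<noteq> x" using simple_graph_edge_neq[OF sg vx] .
  have "{vs ! i, vs ! Suc i} \<noteq> {y, v}" if "i < length vs - 1" for i
  proof
    assume edge: "{vs ! i, vs ! Suc i} = {y, v}"
    have lt: "i < length vs" "Suc i < length vs" "0 < length vs" using that by linarith+
    have "vs ! Suc i \<noteq> vs ! 0" using nth_eq_iff_index_eq[OF vs(2) lt(2,3)] by simp
    moreover have "v \<in> {vs ! i, vs ! Suc i}" using edge by simp
    moreover have "vs ! 0 = v" by (subst vs_split) simp
    ultimately have "vs ! i = vs ! 0" by auto
    then have "i = 0" using nth_eq_iff_index_eq[OF vs(2) lt(1,3)] by simp
    with edge vs_split have "{v, x} = {y, v}" by (metis nth_Cons_0 nth_Cons_Suc)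
    then show False using \<open>v \<noteq> x\<close> \<open>y \<noteq> x\<close> by (auto simp: doubleton_eq_iff)
  qed
  then have "walk (E - {{y, v}}) vs" by (intro walk_Diff[OF vs(3)]) auto
  moreover have "{vs ! i, vs ! Suc i} \<noteq> {last vs, s}" if "i < length vs - 1" for i
  proof
    assume "{vs ! i, vs ! Suc i} = {last vs, s}"
    then have "s \<in> {vs ! i, vs ! Suc i}" by simp
    moreover have "i < length vs" "Suc i < length vs" using that by linarith+
    ultimately show False using s(2) nth_mem by fastforce
  qed
  ultimately have "walk (E - {{y, v}} - {{last vs, s}}) vs"
    by (intro walk_Diff[where E = "E - {{y, v}}"]) auto
  moreover have "vs \<noteq> []" "hd vs = v" by (subst vs_split, simp)+
  ultimately have "reach (E - {{y, v}} - {{last vs, s}}) v (last vs)"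
    using reach_walk by metis
  then show ?thesis using s vs(4) by blast
qed

lemma switch_edges:
  assumes tree: "is_tree n T" and yv: "{y, v} \<in> T" and rs: "{r, s} \<in> T" and "r \<noteq> v"
    and vr: "reach (T - {{y, v}} - {{r, s}}) v r"
  defines "T' \<equiv> rotate_edge (rotate_edge T y v r) s r v"
  shows "is_tree n T'" and "deg T' w = deg T w"
    and "int (M2 T') =
      int (M2 T) + (int (deg T y) - int (deg T s)) * (int (deg T r) - int (deg T v))"
proof -
  let ?T1 = "rotate_edge T y v r"
  have sg: "simple_graph n T" and bridges: "all_bridges T"
    using tree by (simp_all add: is_tree_iff_all_bridges)
  have vr1: "reach (T - {{y, v}}) v r" using reach_mono[OF vr] by blast
  have tree1: "is_tree n ?T1" using is_tree_rotate_edge[OF tree yv vr1] .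
  have "y \<noteq> r" using rotate_edge_fresh(1)[OF bridges yv vr1] .
  then have sr1: "{s, r} \<in> ?T1"
    using rs \<open>r \<noteq> v\<close> unfolding rotate_edge_def by (auto simp: insert_commute doubleton_eq_iff)
  have "T - {{y, v}} - {{r, s}} \<subseteq> ?T1 - {{s, r}}"
    unfolding rotate_edge_def by (auto simp: insert_commute)
  then have rv1: "reach (?T1 - {{s, r}}) r v" using reach_sym reach_mono vr by blast
  show "is_tree n T'" unfolding T'_def using is_tree_rotate_edge[OF tree1 sr1 rv1] .
  show deg_eq: "deg T' w = deg T w" for w
    using deg_rotate_edge[OF tree yv vr1, of w] deg_rotate_edge[OF tree1 sr1 rv1, of w]
    unfolding T'_def by linarith
  have "s \<noteq> v" using rotate_edge_fresh(1)[OF _ sr1 rv1] tree1 by (simp add: is_tree_iff_all_bridges)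
  have "y \<noteq> v" "r \<noteq> s" using simple_graph_edge_neq[OF sg] yv rs by blast+
  define g where "g e = int (\<Prod>w\<in>e. deg T w)" for e
  have "int (M2 T') = sum g T'" unfolding M2_def g_def deg_eq by simp
  also have "\<dots> = sum g T - g {y, v} + g {y, r} - g {s, r} + g {s, v}"
    unfolding T'_def sum_rotate_edge[OF tree1 sr1 rv1] sum_rotate_edge[OF tree yv vr1] by simp
  also have "sum g T = int (M2 T)" unfolding M2_def g_def by simp
  finally show "int (M2 T') =
      int (M2 T) + (int (deg T y) - int (deg T s)) * (int (deg T r) - int (deg T v))"
    unfolding g_def using \<open>y \<noteq> v\<close> \<open>y \<noteq> r\<close> \<open>r \<noteq> s\<close> \<open>s \<noteq> v\<close> by (simp add: algebra_simps)
qed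

lemma M2_increasing_switch:
  assumes tree: "is_tree n T" and max_deg: "\<forall>w<n. deg T w \<le> 4" and "deg T v = 3"
    and xv: "{x, v} \<in> T" "deg T x = 4" and yv: "{y, v} \<in> T" "deg T y = 4" and "x \<noteq> y"
  shows "\<exists>T'. is_tree n T' \<and> (\<forall>w. deg T' w = deg T w) \<and> M2 T < M2 T'"
proof -
  have sg: "simple_graph n T" and acyclic: "\<not> has_cycle T" using tree by (simp_all add: is_tree_def)
  have "{v, x} \<in> T" using xv(1) by (simp add: insert_commute)
  then obtain r s where rs: "{r, s} \<in> T" "deg T r = 4" "deg T s \<noteq> 4"
    and vr: "reach (T - {{y, v}} - {{r, s}}) v r"
    using forest_boundary_edge[of n T v x "\<lambda>w. deg T w = 4" y, OF sg acyclic] xv(2) \<open>x \<noteq> y\<close>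
    by auto
  have "s < n" using sg rs(1) unfolding simple_graph_def by auto
  then have "deg T s < 4" using max_deg rs(3) by fastforce
  have "r \<noteq> v" using rs(2) \<open>deg T v = 3\<close> by auto
  note switch = switch_edges[OF tree yv(1) rs(1) this vr]
  have "int (M2 T) < int (M2 (rotate_edge (rotate_edge T y v r) s r v))"
    unfolding switch(3) using \<open>deg T s < 4\<close> rs(2) yv(2) \<open>deg T v = 3\<close> by simp
  then show ?thesis using switch(1,2) by auto
qed

lemma CT_star_same_degrees:
  assumes "T \<in> CT_star n b" "is_tree n T'" "\<And>w. deg T' w = deg T w"
  shows "T' \<in> CT_star n b"
  using assms unfolding CT_star_def branching_vertices_def by simp

theorem lemma13:
  fixes n b :: nat and T :: "nat set set"
  assumes "1 \<le> b" and "real b < real n / 2 - 1"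
    and "T \<in> CT_star n b"
    and "\<forall>T'\<in>CT_star n b. M2 T' \<le> M2 T"
  shows "\<forall>v<n. deg T v = 3 \<longrightarrow> card {u. adj T u v \<and> deg T u = 4} \<le> 1"
proof (intro allI impI)
  fix v assume "v < n" and "deg T v = 3"
  let ?N = "{u. adj T u v \<and> deg T u = 4}"
  have tree: "is_tree n T" and max_deg: "\<forall>w<n. deg T w \<le> 4"
    using assms(3) unfolding CT_star_def by auto
  have "x = y" if "x \<in> ?N" "y \<in> ?N" for x y
  proof (rule ccontr)
    assume "x \<noteq> y"
    with that obtain T' where "is_tree n T'" "\<forall>w. deg T' w = deg T w" "M2 T < M2 T'"
      using M2_increasing_switch[OF tree max_deg \<open>deg T v = 3\<close>] unfolding adj_def by blast
    then show False using assms(3,4) CT_star_same_degrees by fastforce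
  qed
  then show "card ?N \<le> 1" using card_le_Suc0_iff_eq[of ?N] by (cases "finite ?N") auto
qed

end
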